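(* Let $q\in\mathbb{C}^\times$ be not a root of unity, $Q\in\mathbb{C}^\times$, $\varphi\in\mathbb{C}[x]^{\langle Q\rangle}$, and let $v_0$ be a highest weight vector of the $U_q(\mathfrak{sl}_2^{\langle Q\rangle}[x])$-module $L(\mathbf{u}^{\langle Q\rangle}(\varphi))$. Then, as formal Laurent series in $w$, $$\Psi^+(w)\cdot v_0=q^{\deg\varphi}\frac{\varphi^\flat(q^{-2}w)}{\varphi^\flat(w)}\big(\beta_\varphi^{-1}-Q\beta_\varphi w^{-1}\big)v_0.$$
   Context: $[k]=(q^k-q^{-k})/(q-q^{-1})$, $[x,y]=xy-yx$. $U_q(\mathfrak{sl}_2^{\langle Q\rangle}[x])$ is the $\mathbb{C}$-algebra with generators $X^\pm_t,J_t$ ($t\ge0$), $K^\pm$ and relations: $K^+$ and all $J_t$ pairwise commute; $K^+K^-=1=K^-K^+$; $(K^-)^2=1-(q-q^{-1})J_0$; $X^\pm_{t+1}X^\pm_s-q^{\pm2}X^\pm_sX^\pm_{t+1}=q^{\pm2}X^\pm_tX^\pm_{s+1}-X^\pm_{s+1}X^\pm_t$; $K^+X^\pm_tK^-=q^{\pm2}X^\pm_t$; $q^{\pm2}J_0X^\pm_t-q^{\mp2}X^\pm_tJ_0=\pm[2]X^\pm_t$; $[J_{s+1},X^\pm_t]=q^{\pm2}J_sX^\pm_{t+1}-q^{\mp2}X^\pm_{t+1}J_s$; $[X^+_t,X^-_s]=K^+(J_{s+t}-QJ_{s+t+1})$. Elements: $\Psi^+_{-1}=-QK^+$, $\Psi^+_0=K^+-(q-q^{-1})QK^+J_1$,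 $\Psi^+_t=(q-q^{-1})K^+(J_t-QJ_{t+1})$ for $t>0$; $\Psi^+(w)=\sum_{t\ge-1}\Psi^+_tw^t$. For $\mathbf{u}=(\lambda,(u_t)_{t>0})$, $L(\mathbf{u})$ is the simple module generated by a highest weight vector $v_0$: $X^+_tv_0=0$, $K^+v_0=\lambda v_0$, $J_tv_0=u_tv_0$ ($t>0$). With $p_t(q)(x_1,\dots,x_k)=\sum_{\lambda\vdash t,\ell(\lambda)\le k}q^{-\ell(\lambda)}(q-q^{-1})^{\ell(\lambda)-1}m_\lambda(x_1,\dots,x_k)$, $\tilde\beta=(q-q^{-1})^{-1}(1-\beta^{-2})$ and $p^{\langle Q\rangle}_t(q;\beta)=p_t(q)+\tilde\beta Q^{-t}+(q-q^{-1})\sum_{z=1}^{t-1}\tilde\beta Q^{-t+z}p_z(q)$: for nonzero $\varphi=\beta_\varphi(x-\gamma_1)\cdots(x-\gamma_k)$, $\mathbf{u}^{\langle Q\rangle}(\varphi)=(\beta_\varphi,(\tilde\beta_\varphi Q^{-t})_{t>0})$ if $k=0$ and $(\beta_\varphi q^k,(p^{\langle Q\rangle}_t(q;\beta_\varphi)(\gamma_1,\dots,\gamma_k))_{t>0})$ if $k>0$. $\mathbb{C}[x]^{\langle Q\rangle}=\{\varphi\ne0:\beta_\varphi^{-2}Q^{-1}\text{ not a root of }\varphi\}$. $\varphi^\flat(w)=(1-\gamma_1w)\cdots(1-\gamma_kw)$. *)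

theory Defs
  imports Complex_Main "HOL-Computational_Algebra.Polynomial"
    "HOL-Computational_Algebra.Polynomial_FPS"
    "HOL-Computational_Algebra.Formal_Laurent_Series"
begin

definition qnum :: "complex \<Rightarrow> int \<Rightarrow> complex" where
  "qnum q n = (q powi n - q powi (-n)) / (q - inverse q)"

definition is_UqQ_rep ::
  "complex \<Rightarrow> complex \<Rightarrow> (complex \<Rightarrow> 'v::ab_group_add \<Rightarrow> 'v) \<Rightarrow>
   (nat \<Rightarrow> 'v \<Rightarrow> 'v) \<Rightarrow> (nat \<Rightarrow> 'v \<Rightarrow> 'v) \<Rightarrow> (nat \<Rightarrow> 'v \<Rightarrow> 'v) \<Rightarrow>
   ('v \<Rightarrow> 'v) \<Rightarrow> ('v \<Rightarrow> 'v) \<Rightarrow> bool" where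
  "is_UqQ_rep q Q sc Xp Xm J Kp Km \<longleftrightarrow>
     vector_space sc \<and>
     (\<forall>t. Vector_Spaces.linear sc sc (Xp t)) \<and>
     (\<forall>t. Vector_Spaces.linear sc sc (Xm t)) \<and>
     (\<forall>t. Vector_Spaces.linear sc sc (J t)) \<and>
     Vector_Spaces.linear sc sc Kp \<and> Vector_Spaces.linear sc sc Km \<and>
     (\<forall>v.
       (\<forall>t. Kp (J t v) = J t (Kp v)) \<and>
       (\<forall>s t. J s (J t v) = J t (J s v)) \<and>
       Kp (Km v) = v \<and> Km (Kp v) = v \<and>
       Km (Km v) = v - sc (q - inverse q) (J 0 v) \<and>
       (\<forall>s t. Xp (t+1) (Xp s v) - sc (q^2) (Xp s (Xp (t+1) v))
              = sc (q^2) (Xp t (Xp (s+1) v)) - Xp (s+1) (Xp t v)) \<and>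
       (\<forall>s t. Xm (t+1) (Xm s v) - sc (inverse q ^ 2) (Xm s (Xm (t+1) v))
              = sc (inverse q ^ 2) (Xm t (Xm (s+1) v)) - Xm (s+1) (Xm t v)) \<and>
       (\<forall>t. Kp (Xp t (Km v)) = sc (q^2) (Xp t v)) \<and>
       (\<forall>t. Kp (Xm t (Km v)) = sc (inverse q ^ 2) (Xm t v)) \<and>
       (\<forall>t. sc (q^2) (J 0 (Xp t v)) - sc (inverse q ^ 2) (Xp t (J 0 v))
              = sc (qnum q 2) (Xp t v)) \<and>
       (\<forall>t. sc (inverse q ^ 2) (J 0 (Xm t v)) - sc (q^2) (Xm t (J 0 v))
              = - sc (qnum q 2) (Xm t v)) \<and>
       (\<forall>s t. J (s+1) (Xp t v) - Xp t (J (s+1) v)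
              = sc (q^2) (J s (Xp (t+1) v)) - sc (inverse q ^ 2) (Xp (t+1) (J s v))) \<and>
       (\<forall>s t. J (s+1) (Xm t v) - Xm t (J (s+1) v)
              = sc (inverse q ^ 2) (J s (Xm (t+1) v)) - sc (q^2) (Xm (t+1) (J s v))) \<and>
       (\<forall>s t. Xp t (Xm s v) - Xm s (Xp t v)
              = Kp (J (s+t) v - sc Q (J (s+t+1) v))))"

definition is_simple_rep ::
  "(complex \<Rightarrow> 'v::ab_group_add \<Rightarrow> 'v) \<Rightarrow>
   (nat \<Rightarrow> 'v \<Rightarrow> 'v) \<Rightarrow> (nat \<Rightarrow> 'v \<Rightarrow> 'v) \<Rightarrow> (nat \<Rightarrow> 'v \<Rightarrow> 'v) \<Rightarrow>
   ('v \<Rightarrow> 'v) \<Rightarrow> ('v \<Rightarrow> 'v) \<Rightarrow> bool" where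
  "is_simple_rep sc Xp Xm J Kp Km \<longleftrightarrow>
     (UNIV :: 'v set) \<noteq> {0} \<and>
     (\<forall>W. module.subspace sc W \<and>
          (\<forall>w\<in>W. (\<forall>t. Xp t w \<in> W \<and> Xm t w \<in> W \<and> J t w \<in> W) \<and> Kp w \<in> W \<and> Km w \<in> W)
          \<longrightarrow> W = {0} \<or> W = UNIV)"

definition is_hw_vector ::
  "(complex \<Rightarrow> 'v::ab_group_add \<Rightarrow> 'v) \<Rightarrow>
   (nat \<Rightarrow> 'v \<Rightarrow> 'v) \<Rightarrow> (nat \<Rightarrow> 'v \<Rightarrow> 'v) \<Rightarrow> ('v \<Rightarrow> 'v) \<Rightarrow>
   complex \<Rightarrow> (nat \<Rightarrow> complex) \<Rightarrow> 'v \<Rightarrow> bool" where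
  "is_hw_vector sc Xp J Kp lam u v0 \<longleftrightarrow>
     v0 \<noteq> 0 \<and> (\<forall>t. Xp t v0 = 0) \<and> Kp v0 = sc lam v0 \<and>
     (\<forall>t>0. J t v0 = sc (u t) v0)"

text \<open>Coefficients Psi^+_t (t :: int) of Psi^+(w); zero for t < -1.\<close>
definition PsiP ::
  "complex \<Rightarrow> complex \<Rightarrow> (complex \<Rightarrow> 'v::ab_group_add \<Rightarrow> 'v) \<Rightarrow>
   (nat \<Rightarrow> 'v \<Rightarrow> 'v) \<Rightarrow> ('v \<Rightarrow> 'v) \<Rightarrow> int \<Rightarrow> 'v \<Rightarrow> 'v" where
  "PsiP q Q sc J Kp t v =
     (if t = -1 then - sc Q (Kp v)
      else if t = 0 then Kp v - sc ((q - inverse q) * Q) (Kp (J 1 v))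
      else if t > 0 then sc (q - inverse q) (Kp (J (nat t) v - sc Q (J (nat t + 1) v)))
      else 0)"

text \<open>p_t(q)(x_1,...,x_k) = sum over partitions lambda of t with at most k parts of
  q^(-l(lambda)) (q-q^(-1))^(l(lambda)-1) m_lambda(x).  Unfolding the monomial symmetric
  functions m_lambda, this is the sum over all exponent vectors a : {0..<k} -> nat with
  |a| = t of the same weight (l = number of nonzero entries of a) times x^a.\<close>
definition p_poly :: "complex \<Rightarrow> nat \<Rightarrow> complex list \<Rightarrow> complex" where
  "p_poly q t xs =
     (\<Sum>a\<in>{a :: nat \<Rightarrow> nat. (\<forall>i\<ge>length xs. a i = 0) \<and> (\<Sum>i<length xs. a i) = t}.
        (let l = card {i. i < length xs \<and> a i \<noteq> 0} in
           inverse q ^ l * (q - inverse q) powi (int l - 1)) *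
        (\<Prod>i<length xs. (xs ! i) ^ a i))"

definition beta_tilde :: "complex \<Rightarrow> complex \<Rightarrow> complex" where
  "beta_tilde q \<beta> = (1 - inverse (\<beta>^2)) / (q - inverse q)"

definition p_polyQ :: "complex \<Rightarrow> complex \<Rightarrow> complex \<Rightarrow> nat \<Rightarrow> complex list \<Rightarrow> complex" where
  "p_polyQ q Q \<beta> t xs =
     p_poly q t xs + beta_tilde q \<beta> * Q powi (- int t) +
     (q - inverse q) * (\<Sum>z\<in>{1..<t}. beta_tilde q \<beta> * Q powi (int z - int t) * p_poly q z xs)"

definition phi_poly :: "complex \<Rightarrow> complex list \<Rightarrow> complex poly" where
  "phi_poly \<beta> gs = smult \<beta> (\<Prod>g\<leftarrow>gs. [:-g, 1:])"

text \<open>u^<Q>(phi): returns (lambda, (u_t)_t) (u_0 is irrelevant).\<close>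
definition uQ_lam :: "complex \<Rightarrow> complex \<Rightarrow> complex list \<Rightarrow> complex" where
  "uQ_lam q \<beta> gs = (if gs = [] then \<beta> else \<beta> * q ^ length gs)"

definition uQ_u :: "complex \<Rightarrow> complex \<Rightarrow> complex \<Rightarrow> complex list \<Rightarrow> nat \<Rightarrow> complex" where
  "uQ_u q Q \<beta> gs t =
     (if gs = [] then beta_tilde q \<beta> * Q powi (- int t) else p_polyQ q Q \<beta> t gs)"

definition phi_flat :: "complex list \<Rightarrow> complex poly" where
  "phi_flat gs = (\<Prod>g\<leftarrow>gs. [:1, -g:])"

definition poly_fls :: "complex poly \<Rightarrow> complex fls" where
  "poly_fls p = fps_to_fls (fps_of_poly p)"

definition rhs_series :: "complex \<Rightarrow> complex \<Rightarrow> complex \<Rightarrow> complex list \<Rightarrow> complex fls" where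
  "rhs_series q Q \<beta> gs =
     fls_const (q ^ length gs) *
     poly_fls (pcompose (phi_flat gs) [:0, inverse q ^ 2:]) / poly_fls (phi_flat gs) *
     (fls_const (inverse \<beta>) - fls_const (Q * \<beta>) * fls_X_inv)"

end

theory Submission
  imports Defs
begin

unbundle fps_syntax

(*
  Put F(w) = phi^flat(q^-2 w) / phi^flat(w) = prod_i (1 - q^-2 g_i w) / (1 - g_i w).
  Expanding each factor as 1 + (1 - q^-2) sum_{m>0} g_i^m w^m shows that
  (q - q^-1) p_t(q)(g_1, ..., g_k) is the t-th coefficient of F: a monomial with l nonzero
  exponents picks up (1 - q^-2)^l = (q - q^-1) q^-l (q - q^-1)^(l-1).
  Since Psi^+(w) = K^+ (1 - Q w^-1) U(w) with U(w) = 1 + (q - q^-1) sum_{t>0} J_t w^t, and the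
  correction terms of p^<Q>_t say exactly that (1 - Q^-1 w) U(w) = (1 - beta^-2 Q^-1 w) F(w)
  on v0, we get Psi^+(w) v0 = lambda (beta^-2 - Q w^-1) F(w) v0 with lambda = beta q^deg phi.
*)

definition weak_compositions :: "nat \<Rightarrow> nat \<Rightarrow> (nat \<Rightarrow> nat) set" where
  "weak_compositions n t = {a. (\<forall>i\<ge>n. a i = 0) \<and> (\<Sum>i<n. a i) = t}"

lemma finite_weak_compositions: "finite (weak_compositions n t)"
proof -
  let ?B = "{a. \<forall>i. (i \<in> {..<n} \<longrightarrow> a i \<in> {..t}) \<and> (i \<notin> {..<n} \<longrightarrow> a i = 0)}"
  have "weak_compositions n t \<subseteq> ?B"
  proof
    fix a assume a: "a \<in> weak_compositions n t"
    have "a i \<le> t" if "i < n" for i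
      using a member_le_sum[of i "{..<n}" a] that by (auto simp: weak_compositions_def)
    then show "a \<in> ?B"
      using a by (auto simp: weak_compositions_def)
  qed
  moreover have "finite ?B"
    by (rule finite_set_of_finite_funs) auto
  ultimately show ?thesis
    by (rule finite_subset)
qed

lemma weak_compositions_0_parts: "weak_compositions 0 t = (if t = 0 then {\<lambda>_. 0} else {})"
  by (auto simp: weak_compositions_def)

lemma weak_compositions_of_0: "weak_compositions n 0 = {\<lambda>_. 0}"
  by (auto simp: weak_compositions_def fun_eq_iff not_less[symmetric])

lemma fps_prod_lessThan_nth:
  fixes f :: "nat \<Rightarrow> 'a::comm_semiring_1 fps"
  shows "(\<Prod>i<n. f i) $ t = (\<Sum>a\<in>weak_compositions n t. \<Prod>i<n. f i $ a i)"
proof (induction n arbitrary: t)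
  case 0
  then show ?case by (simp add: weak_compositions_0_parts)
next
  case (Suc n)
  have "(\<Prod>i<Suc n. f i) $ t = (\<Sum>j=0..t. (\<Prod>i<n. f i) $ j * f n $ (t - j))"
    by (simp add: fps_mult_nth)
  also have "\<dots> = (\<Sum>j=0..t. \<Sum>a\<in>weak_compositions n j. (\<Prod>i<n. f i $ a i) * f n $ (t - j))"
    by (simp add: Suc.IH sum_distrib_right)
  also have "\<dots> = (\<Sum>(j, a)\<in>Sigma {0..t} (weak_compositions n). (\<Prod>i<n. f i $ a i) * f n $ (t - j))"
    by (rule sum.Sigma) (auto simp: finite_weak_compositions)
  also have "\<dots> = (\<Sum>a\<in>weak_compositions (Suc n) t. \<Prod>i<Suc n. f i $ a i)"
  proof (rule sum.reindex_bij_witness[where i = "\<lambda>a. (t - a n, a(n := 0))" and j = "\<lambda>(j, a). a(n := t - j)"])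
    fix a assume a: "a \<in> weak_compositions (Suc n) t"
    then have s: "(\<Sum>i<n. a i) + a n = t" by (simp add: weak_compositions_def)
    show "(case (t - a n, a(n := 0)) of (j, a) \<Rightarrow> a(n := t - j)) = a"
      using s by auto
    show "(t - a n, a(n := 0)) \<in> Sigma {0..t} (weak_compositions n)"
      using a s by (auto simp: weak_compositions_def)
  next
    fix ja assume ja: "ja \<in> Sigma {0..t} (weak_compositions n)"
    obtain j b where jb: "ja = (j, b)" by force
    have b: "\<forall>i\<ge>n. b i = 0" "(\<Sum>i<n. b i) = j" "j \<le> t"
      using ja jb by (auto simp: weak_compositions_def)
    have "(\<Sum>i<n. (b(n := t - j)) i) = j" using b by (auto intro: sum.cong)
    then show "(case ja of (j, a) \<Rightarrow> a(n := t - j)) \<in> weak_compositions (Suc n) t"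
      using jb b by (auto simp: weak_compositions_def)
    show "(t - (case ja of (j, a) \<Rightarrow> a(n := t - j)) n, (case ja of (j, a) \<Rightarrow> a(n := t - j))(n := 0)) = ja"
      using jb b by auto
    show "(\<Prod>i<Suc n. f i $ (case ja of (j, a) \<Rightarrow> a(n := t - j)) i) =
        (case ja of (j, a) \<Rightarrow> (\<Prod>i<n. f i $ a i) * f n $ (t - j))"
      using jb b by (auto intro!: prod.cong)
  qed
  finally show ?case .
qed

text \<open>The expansion of \<open>(1 - r x w) / (1 - x w)\<close>.\<close>
definition linear_ratio_fps :: "'a::comm_ring_1 \<Rightarrow> 'a \<Rightarrow> 'a fps" where
  "linear_ratio_fps r x = Abs_fps (\<lambda>m. if m = 0 then 1 else (1 - r) * x ^ m)"

lemma fps_of_poly_times_linear_ratio_fps: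
  "fps_of_poly [:1, -x:] * linear_ratio_fps r x = fps_of_poly [:1, -(r * x):]"
proof (rule fps_ext)
  fix n
  let ?E = "linear_ratio_fps r x"
  have linear: "fps_of_poly [:1, -x:] = 1 - fps_const x * fps_X"
    by (simp add: fps_of_poly_pCons mult.commute)
  have "fps_of_poly [:1, -x:] * ?E = ?E - fps_const x * (fps_X * ?E)"
    unfolding linear by (simp add: algebra_simps)
  then have "(fps_of_poly [:1, -x:] * ?E) $ n = ?E $ n - x * (if n = 0 then 0 else ?E $ (n - 1))"
    by simp
  also have "\<dots> = fps_of_poly [:1, -(r * x):] $ n"
    by (cases n) (auto simp: linear_ratio_fps_def coeff_pCons algebra_simps split: nat.split)
  finally show "(fps_of_poly [:1, -x:] * ?E) $ n = fps_of_poly [:1, -(r * x):] $ n" .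
qed

definition flat_ratio_fps :: "complex \<Rightarrow> complex list \<Rightarrow> complex fps" where
  "flat_ratio_fps q gs = (\<Prod>i<length gs. linear_ratio_fps (inverse q ^ 2) (gs ! i))"

lemma fps_of_poly_phi_flat_times_flat_ratio_fps:
  "fps_of_poly (phi_flat gs) * flat_ratio_fps q gs =
   fps_of_poly (pcompose (phi_flat gs) [:0, inverse q ^ 2:])"
proof (induction gs)
  case Nil
  then show ?case by (simp add: phi_flat_def flat_ratio_fps_def pcompose_1)
next
  case (Cons g gs)
  let ?r = "inverse q ^ 2"
  have "fps_of_poly (phi_flat (g # gs)) * flat_ratio_fps q (g # gs) =
      (fps_of_poly [:1, -g:] * linear_ratio_fps ?r g) * (fps_of_poly (phi_flat gs) * flat_ratio_fps q gs)"
    by (simp add: phi_flat_def flat_ratio_fps_def fps_of_poly_mult prod.lessThan_Suc_shift mult_ac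
        del: prod.lessThan_Suc)
  also have "\<dots> = fps_of_poly ([:1, -(?r * g):] * pcompose (phi_flat gs) [:0, ?r:])"
    by (simp only: fps_of_poly_times_linear_ratio_fps Cons.IH fps_of_poly_mult)
  also have "[:1, -(?r * g):] = pcompose [:1, -g:] [:0, ?r:]"
    by (simp add: pcompose_pCons mult.commute)
  also have "pcompose [:1, -g:] [:0, ?r:] * pcompose (phi_flat gs) [:0, ?r:] =
      pcompose (phi_flat (g # gs)) [:0, ?r:]"
    by (simp only: phi_flat_def list.map prod_list.Cons pcompose_mult)
  finally show ?case .
qed

lemma flat_ratio_fps_nth_0 [simp]: "flat_ratio_fps q gs $ 0 = 1"
  by (simp add: flat_ratio_fps_def fps_prod_lessThan_nth weak_compositions_of_0 linear_ratio_fps_def)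

lemma phi_flat_quotient_eq_flat_ratio_fps:
  "poly_fls (pcompose (phi_flat gs) [:0, inverse q ^ 2:]) / poly_fls (phi_flat gs) =
   fps_to_fls (flat_ratio_fps q gs)"
proof -
  have "phi_flat gs \<noteq> 0"
    by (auto simp: phi_flat_def prod_list_zero_iff)
  then have "poly_fls (phi_flat gs) \<noteq> 0"
    by (simp add: poly_fls_def)
  then show ?thesis
    by (simp add: poly_fls_def fps_of_poly_phi_flat_times_flat_ratio_fps[symmetric]
        fls_times_fps_to_fls)
qed

lemma rhs_series_nth:
  fixes q Q \<beta> :: complex and gs :: "complex list"
  defines "F \<equiv> fps_to_fls (flat_ratio_fps q gs)"
  shows "rhs_series q Q \<beta> gs $$ t = q ^ length gs * (inverse \<beta> * F $$ t - Q * \<beta> * F $$ (t + 1))"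
proof -
  have "rhs_series q Q \<beta> gs = fls_const (q ^ length gs) * F * (fls_const (inverse \<beta>) - fls_const (Q * \<beta>) * fls_X_inv)"
    unfolding rhs_series_def F_def phi_flat_quotient_eq_flat_ratio_fps[symmetric]
    by (simp only: times_divide_eq_right)
  also have "\<dots> = fls_const (q ^ length gs) * (fls_const (inverse \<beta>) * F) -
      fls_const (q ^ length gs) * (fls_const (Q * \<beta>) * fls_shift 1 F)"
    by (simp add: fls_X_inv_times_conv_shift(2)[symmetric] algebra_simps)
  finally show ?thesis
    by (simp add: right_diff_distrib)
qed

lemma p_poly_eq_flat_ratio_fps_nth:
  assumes "q \<noteq> 0" and "t \<ge> 1"
  shows "(q - inverse q) * p_poly q t gs = flat_ratio_fps q gs $ t"
proof -
  let ?n = "length gs" and ?c = "q - inverse q"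
  have "?c * p_poly q t gs = (\<Sum>a\<in>weak_compositions ?n t. \<Prod>i<?n. linear_ratio_fps (inverse q ^ 2) (gs ! i) $ a i)"
    unfolding p_poly_def weak_compositions_def[symmetric] sum_distrib_left
  proof (rule sum.cong[OF refl])
    fix a assume a: "a \<in> weak_compositions ?n t"
    define L where "L = {i. i < ?n \<and> a i \<noteq> 0}"
    have "L \<noteq> {}"
      using a \<open>t \<ge> 1\<close> by (auto simp: L_def weak_compositions_def intro: ccontr)
    then have "card L \<ge> 1"
      by (simp add: L_def Suc_le_eq card_gt_0_iff)
    then have weight: "?c * (inverse q ^ card L * ?c powi (int (card L) - 1)) = (1 - inverse q ^ 2) ^ card L"
      using \<open>q \<noteq> 0\<close>
      by (cases "card L") (auto simp: power_int_def field_simps power2_eq_square power_mult_distrib)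
    have "(\<Prod>i<?n. linear_ratio_fps (inverse q ^ 2) (gs ! i) $ a i) =
        (\<Prod>i<?n. (if a i \<noteq> 0 then 1 - inverse q ^ 2 else 1) * (gs ! i) ^ a i)"
      by (rule prod.cong) (auto simp: linear_ratio_fps_def)
    also have "\<dots> = (\<Prod>i<?n. if a i \<noteq> 0 then 1 - inverse q ^ 2 else 1) * (\<Prod>i<?n. (gs ! i) ^ a i)"
      by (rule prod.distrib)
    also have "(\<Prod>i<?n. if a i \<noteq> 0 then 1 - inverse q ^ 2 else 1) =
        (\<Prod>i\<in>{i\<in>{..<?n}. a i \<noteq> 0}. 1 - inverse q ^ 2)"
      by (rule prod.inter_filter[symmetric]) simp
    also have "{i\<in>{..<?n}. a i \<noteq> 0} = L"
      by (auto simp: L_def)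
    finally have factors: "(\<Prod>i<?n. linear_ratio_fps (inverse q ^ 2) (gs ! i) $ a i) =
        (1 - inverse q ^ 2) ^ card L * (\<Prod>i<?n. (gs ! i) ^ a i)"
      by simp
    show "?c * ((let l = card {i. i < ?n \<and> a i \<noteq> 0} in inverse q ^ l * ?c powi (int l - 1)) *
        (\<Prod>i<?n. (gs ! i) ^ a i)) = (\<Prod>i<?n. linear_ratio_fps (inverse q ^ 2) (gs ! i) $ a i)"
      unfolding Let_def L_def[symmetric] factors weight[symmetric] by (simp only: mult.assoc)
  qed
  also have "\<dots> = flat_ratio_fps q gs $ t"
    by (simp add: flat_ratio_fps_def fps_prod_lessThan_nth)
  finally show ?thesis .
qed

text \<open>The eigenvalue on a highest weight vector of \<open>U(w) = 1 + (q - q\<^sup>-\<^sup>1) \<Sum>\<^sub>t\<^sub>>\<^sub>0 J\<^sub>t w\<^sup>t\<close>,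
  the factor in \<open>\<Psi>\<^sup>+(w) = K\<^sup>+ (1 - Q w\<^sup>-\<^sup>1) U(w)\<close>.\<close>
definition hw_J_fps :: "complex \<Rightarrow> (nat \<Rightarrow> complex) \<Rightarrow> complex fps" where
  "hw_J_fps q u = Abs_fps (\<lambda>t. if t = 0 then 1 else (q - inverse q) * u t)"

lemma PsiP_hw_vector:
  fixes q Q :: complex and sc :: "complex \<Rightarrow> 'v::ab_group_add \<Rightarrow> 'v"
  assumes "vector_space sc" and "Vector_Spaces.linear sc sc Kp"
    and "is_hw_vector sc Xp J Kp lam u v0"
  defines "U \<equiv> fps_to_fls (hw_J_fps q u)"
  shows "PsiP q Q sc J Kp t v0 = sc (lam * (U $$ t - Q * U $$ (t + 1))) v0"
proof -
  interpret vector_space sc by fact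
  interpret K: Vector_Spaces.linear sc sc Kp by fact
  have Kv: "Kp v0 = sc lam v0" and Jv: "\<And>m. m > 0 \<Longrightarrow> J m v0 = sc (u m) v0"
    using assms(3) by (simp_all add: is_hw_vector_def)
  consider "t < -1" | "t = -1" | "t = 0" | (positive) "t > 0"
    by linarith
  then show ?thesis
  proof cases
    case positive
    have "Kp (J (nat t) v0 - sc Q (J (Suc (nat t)) v0)) = sc ((u (nat t) - Q * u (Suc (nat t))) * lam) v0"
      using positive by (simp add: Jv K.diff K.scale Kv scale_left_diff_distrib algebra_simps)
    then have "PsiP q Q sc J Kp t v0 = sc ((q - inverse q) * (u (nat t) - Q * u (Suc (nat t))) * lam) v0"
      using positive by (simp add: PsiP_def)
    moreover have "nat (t + 1) = Suc (nat t)"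
      using positive by simp
    ultimately show ?thesis
      using positive by (simp add: U_def hw_J_fps_def algebra_simps)
  qed (auto simp: PsiP_def U_def hw_J_fps_def Kv Jv K.scale scale_left_diff_distrib algebra_simps)
qed

lemma uQ_lam_eq: "uQ_lam q \<beta> gs = \<beta> * q ^ length gs"
  by (simp add: uQ_lam_def)

lemma uQ_u_eq_p_polyQ:
  assumes "t \<ge> 1"
  shows "uQ_u q Q \<beta> gs t = p_polyQ q Q \<beta> t gs"
proof -
  have "p_poly q z [] = 0" if "z \<ge> 1" for z
    using that by (simp add: p_poly_def)
  then show ?thesis
    using assms by (simp add: uQ_u_def p_polyQ_def)
qed

lemma geometric_tail_telescope:
  fixes f :: "nat \<Rightarrow> 'a::field" and Q b :: 'a
  assumes "Q \<noteq> 0"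
  defines "g \<equiv> \<lambda>t. f t + b * (\<Sum>z<t. inverse Q ^ (t - z) * f z)"
  shows "g t - Q * g (Suc t) = (1 - b) * f t - Q * f (Suc t)"
proof -
  have "(\<Sum>z<Suc t. inverse Q ^ (Suc t - z) * f z) = inverse Q * ((\<Sum>z<t. inverse Q ^ (t - z) * f z) + f t)"
    by (simp add: sum_distrib_left distrib_left Suc_diff_le mult_ac)
  then show ?thesis
    using assms by (simp add: g_def field_simps)
qed

lemma power_int_diff_eq_inverse_power:
  fixes Q :: "'a::division_ring"
  assumes "z \<le> t"
  shows "Q powi (int z - int t) = inverse Q ^ (t - z)"
proof -
  have "int z - int t = - int (t - z)"
    using assms by simp
  then show ?thesis
    by (simp only: power_int_minus power_int_of_nat power_inverse)
qed

lemma hw_J_fps_uQ_u_nth: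
  fixes q Q \<beta> :: complex and gs :: "complex list"
  assumes "q \<noteq> 0" and "q - inverse q \<noteq> 0"
  defines "F \<equiv> flat_ratio_fps q gs"
  shows "hw_J_fps q (uQ_u q Q \<beta> gs) $ t =
    F $ t + (1 - inverse (\<beta>^2)) * (\<Sum>z<t. inverse Q ^ (t - z) * F $ z)"
proof (cases "t = 0")
  case False
  let ?c = "q - inverse q" and ?b = "1 - inverse (\<beta>^2)"
  have cb: "?c * beta_tilde q \<beta> = ?b"
    using assms(2) by (simp add: beta_tilde_def)
  have cp: "?c * p_poly q z gs = F $ z" if "z \<ge> 1" for z
    using p_poly_eq_flat_ratio_fps_nth[OF assms(1) that] by (simp add: F_def)
  have "?c * (?c * (\<Sum>z\<in>{1..<t}. beta_tilde q \<beta> * Q powi (int z - int t) * p_poly q z gs)) =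
      (\<Sum>z\<in>{1..<t}. (?c * beta_tilde q \<beta>) * Q powi (int z - int t) * (?c * p_poly q z gs))"
    by (simp add: sum_distrib_left mult_ac)
  also have "\<dots> = ?b * (\<Sum>z\<in>{1..<t}. inverse Q ^ (t - z) * F $ z)"
    unfolding sum_distrib_left
    by (rule sum.cong) (simp_all add: cb cp power_int_diff_eq_inverse_power mult.assoc)
  finally have "?c * p_polyQ q Q \<beta> t gs =
      F $ t + ?b * (inverse Q ^ (t - 0) * F $ 0 + (\<Sum>z\<in>{1..<t}. inverse Q ^ (t - z) * F $ z))"
    using False cp[of t] cb power_int_diff_eq_inverse_power[of 0 t Q]
    by (simp add: p_polyQ_def distrib_left mult.assoc[symmetric] F_def)
  also have "\<dots> = F $ t + ?b * (\<Sum>z<t. inverse Q ^ (t - z) * F $ z)"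
    using False by (simp add: lessThan_atLeast0 sum.atLeast_Suc_lessThan)
  finally show ?thesis
    using False by (simp add: hw_J_fps_def uQ_u_eq_p_polyQ)
qed (simp add: hw_J_fps_def F_def)

lemma hw_J_fps_uQ_u_difference:
  fixes q Q \<beta> :: complex and gs :: "complex list"
  assumes "q \<noteq> 0" and "q - inverse q \<noteq> 0" and "Q \<noteq> 0"
  defines "U \<equiv> fps_to_fls (hw_J_fps q (uQ_u q Q \<beta> gs))"
    and "F \<equiv> fps_to_fls (flat_ratio_fps q gs)"
  shows "U $$ t - Q * U $$ (t + 1) = inverse (\<beta>^2) * F $$ t - Q * F $$ (t + 1)"
proof (cases "t < 0")
  case True
  then have "t = -1 \<or> t < -1"
    by linarith
  then show ?thesis
    by (auto simp: U_def F_def hw_J_fps_def)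
next
  case False
  then obtain m where t: "t = int m"
    by (metis nonneg_int_cases not_less)
  have "U $$ t - Q * U $$ (t + 1) =
      (1 - (1 - inverse (\<beta>^2))) * flat_ratio_fps q gs $ m - Q * flat_ratio_fps q gs $ Suc m"
    using geometric_tail_telescope[OF assms(3), where f = "\<lambda>z. flat_ratio_fps q gs $ z" and b = "1 - inverse (\<beta>^2)" and t = m]
    by (simp add: U_def t hw_J_fps_uQ_u_nth[OF assms(1,2)] nat_add_distrib)
  then show ?thesis
    by (simp add: F_def t nat_add_distrib)
qed

theorem mainTheorem8:
  fixes q Q \<beta> :: complex and gs :: "complex list"
    and sc :: "complex \<Rightarrow> 'v::ab_group_add \<Rightarrow> 'v"
    and Xp Xm J :: "nat \<Rightarrow> 'v \<Rightarrow> 'v" and Kp Km :: "'v \<Rightarrow> 'v" and v0 :: 'v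
  assumes "q \<noteq> 0" and "\<forall>n::nat. n > 0 \<longrightarrow> q ^ n \<noteq> 1"
    and "Q \<noteq> 0"
    and "\<beta> \<noteq> 0"
    and "poly (phi_poly \<beta> gs) (inverse (\<beta>^2 * Q)) \<noteq> 0"
    and "is_UqQ_rep q Q sc Xp Xm J Kp Km"
    and "is_simple_rep sc Xp Xm J Kp Km"
    and "is_hw_vector sc Xp J Kp (uQ_lam q \<beta> gs) (uQ_u q Q \<beta> gs) v0"
  shows "\<forall>t::int. PsiP q Q sc J Kp t v0 = sc (fls_nth (rhs_series q Q \<beta> gs) t) v0"
proof
  fix t :: int
  have vs: "vector_space sc" and K: "Vector_Spaces.linear sc sc Kp"
    using assms(6) by (simp_all add: is_UqQ_rep_def)
  have c: "q - inverse q \<noteq> 0"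
  proof
    assume "q - inverse q = 0"
    then have "q ^ 2 = 1"
      using assms(1) by (simp add: power2_eq_square field_simps)
    then show False
      using assms(2) by auto
  qed
  let ?U = "fps_to_fls (hw_J_fps q (uQ_u q Q \<beta> gs))" and ?F = "fps_to_fls (flat_ratio_fps q gs)"
  have "PsiP q Q sc J Kp t v0 = sc (\<beta> * q ^ length gs * (?U $$ t - Q * ?U $$ (t + 1))) v0"
    using PsiP_hw_vector[OF vs K assms(8)] by (simp add: uQ_lam_eq)
  also have "\<dots> = sc (\<beta> * q ^ length gs * (inverse (\<beta>^2) * ?F $$ t - Q * ?F $$ (t + 1))) v0"
    by (simp only: hw_J_fps_uQ_u_difference[OF assms(1) c assms(3)])
  also have "\<dots> = sc (rhs_series q Q \<beta> gs $$ t) v0"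
  proof -
    have "\<beta> * q ^ length gs * (inverse (\<beta>^2) * x - Q * y) = q ^ length gs * (inverse \<beta> * x - Q * \<beta> * y)"
      for x y
      using assms(4) by (simp add: field_simps power2_eq_square)
    then show ?thesis
      by (simp only: rhs_series_nth)
  qed
  finally show "PsiP q Q sc J Kp t v0 = sc (fls_nth (rhs_series q Q \<beta> gs) t) v0" .
qed

end
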